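(* Let $s\ge26$ be an integer, $\psi_s(z):=z^{s-1}(z+s)-(s-1)^{s-1}$, and let $\alpha$ be a nontrivial root of $\psi_s$ of degree $d$, with conjugates $\beta_1,\dots,\beta_d$ and $N:=\prod_j\beta_j$. Let $n$ be the integer with $nN=(s-1)^d$ (so $|n|\ge2$ and $n\mid s-1$). Then $$d>\frac{(\log|n|)(s-1)}{1+\log(s-1)}\ge\delta(s):=\frac{(\log p_s)(s-1)}{1+\log(s-1)},$$ where $p_s$ is the least prime factor of $s-1$.
   Context: When $s$ is odd, $z=1-s$ is a double root of $\psi_s$, called trivial; all other roots are nontrivial. When $s$ is even all roots are nontrivial. For nontrivial $\alpha$ the number $(s-1)^d/N$ is known to be an integer $n$ with $|n|\ge2$ and $n\mid(s-1)$. *)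

theory Defs
  imports "HOL-Analysis.Analysis" "HOL-Computational_Algebra.Computational_Algebra"
begin

definition psi :: "nat \<Rightarrow> int poly" where
  "psi s = monom 1 (s - 1) * [:int s, 1:] - [:(int s - 1) ^ (s - 1):]"

definition trivial_root :: "nat \<Rightarrow> complex \<Rightarrow> bool" where
  "trivial_root s z \<longleftrightarrow> odd s \<and> z = 1 - of_nat s"

definition least_prime_factor :: "nat \<Rightarrow> nat" where
  "least_prime_factor m = Min (prime_factors m)"

definition delta :: "nat \<Rightarrow> real" where
  "delta s = ln (real (least_prime_factor (s - 1))) * (real s - 1) / (1 + ln (real s - 1))"

end

theory Submission
  imports Defs "Berlekamp_Zassenhaus.Factor_Bound"
begin

(* Substituting x = (s-1)/z turns the roots of psi_s into those of x^s - s x - (s-1).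
   If p is the minimal polynomial of alpha, Gauss's lemma makes p a monic integer
   polynomial, so |n| = (s-1)^d / |N| is the product of the moduli of the d reciprocal
   roots x = (s-1)/beta, and n divides (s-1)^d.  Each |x|^(s-1) < e (s-1), which gives
   the first inequality after taking logarithms.  The second follows once |n| <> 1,
   since every prime factor of n divides s - 1.  For odd s every reciprocal root other
   than -1 lies outside the unit circle.  For even s none lies on it, at most one lies
   inside and it has modulus at least (s-2)/s, while any root outside contributes,
   together with its conjugate, a factor larger than s/(s-2): for real roots by
   (s/(s-2))^s < 9, for nonreal ones via an argument estimate giving |x|^(s-1) >= 3. *)

section \<open>Location of the roots of x^s - s x - (s - 1)\<close>

definition psi_recip_root :: "nat \<Rightarrow> complex \<Rightarrow> bool" where
  "psi_recip_root s x \<longleftrightarrow> x ^ s = of_nat s * x + of_nat (s - 1)"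

lemma poly_psi:
  fixes z :: complex
  assumes "s \<ge> 1"
  shows "poly (map_poly of_int (psi s)) z = z ^ (s - 1) * (z + of_nat s) - of_nat (s - 1) ^ (s - 1)"
  using assms by (simp add: psi_def hom_distribs poly_monom of_nat_diff)

lemma psi_recip_root_of_psi_root:
  fixes z :: complex
  assumes "s \<ge> 2" and "poly (map_poly of_int (psi s)) z = 0"
  shows "z \<noteq> 0" and "psi_recip_root s (of_nat (s - 1) / z)"
proof -
  obtain m where m: "s = Suc m" "m \<ge> 1" using assms(1) by (cases s) auto
  let ?c = "of_nat m :: complex"
  have root: "?c ^ m = z ^ m * (z + of_nat s)"
    using assms poly_psi[of s z] m by simp
  show z0: "z \<noteq> 0" using root m(2) by (auto simp: power_0_left)
  have "(?c / z) ^ s = ?c * ?c ^ m / (z * z ^ m)"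
    by (simp only: m power_divide power_Suc times_divide_times_eq)
  also have "\<dots> = z ^ m * (?c * (z + of_nat s)) / (z ^ m * z)"
    unfolding root by (simp only: mult.commute mult.left_commute)
  also have "\<dots> = ?c * (z + of_nat s) / z"
    by (rule nonzero_mult_divide_mult_cancel_left) (use z0 in simp)
  also have "\<dots> = of_nat s * (?c / z) + ?c"
    using z0 by (simp add: distrib_left add_divide_distrib mult.commute)
  finally show "psi_recip_root s (of_nat (s - 1) / z)"
    by (simp add: psi_recip_root_def m)
qed

lemma psi_recip_root_minus_one_iff:
  assumes "s \<ge> 1"
  shows "psi_recip_root s (-1) \<longleftrightarrow> odd s"
  using assms by (cases "even s") (simp_all add: psi_recip_root_def of_nat_diff)

lemma psi_recip_root_nonzero:
  assumes "s \<ge> 2" and "psi_recip_root s x"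
  shows "x \<noteq> 0"
  using assms by (auto simp: psi_recip_root_def power_0_left)

lemma psi_recip_root_norm_power_less:
  assumes "s \<ge> 3" and "psi_recip_root s x"
  shows "cmod x ^ (s - 1) < exp 1 * (real s - 1)"
proof -
  let ?r = "cmod x"
  have e: "27 / 10 < exp (1::real)"
    using e_approx_32 unfolding abs_le_iff by simp
  have "?r ^ s = cmod (of_nat s * x + of_nat (s - 1))"
    using assms(2) unfolding psi_recip_root_def by (simp flip: norm_power)
  also have "\<dots> \<le> real s * ?r + (real s - 1)"
    using norm_triangle_ineq[of "of_nat s * x" "of_nat (s - 1)"] assms(1)
    by (simp add: norm_mult del: of_nat_diff)
  finally have bound: "?r * ?r ^ (s - 1) \<le> real s * ?r + (real s - 1)"
    using assms(1) by (simp flip: power_Suc)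
  have "?r ^ (s - 1) \<le> 2 * real s - 1"
  proof (cases "?r \<ge> 1")
    case True
    have "(real s - 1) * 1 \<le> (real s - 1) * ?r"
      using True assms(1) by (intro mult_left_mono) auto
    with bound have "?r * ?r ^ (s - 1) \<le> ?r * (2 * real s - 1)"
      by (simp add: algebra_simps)
    with True show ?thesis by (subst (asm) mult_le_cancel_left_pos) auto
  next
    case False
    then have "?r ^ (s - 1) \<le> 1" by (simp add: power_le_one)
    with assms(1) show ?thesis by simp
  qed
  also have "\<dots> < 27 / 10 * (real s - 1)" using assms(1) by simp
  also have "\<dots> < exp 1 * (real s - 1)" using e assms(1) by (intro mult_strict_right_mono) auto
  finally show ?thesis .
qed

lemma psi_recip_root_unit_circle_eq_minus_1:
  assumes "s \<ge> 2" and "psi_recip_root s x" and "cmod x = 1"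
  shows "x = -1"
proof -
  have "cmod (of_nat s * x + of_nat (s - 1)) = 1"
    using assms(2,3) unfolding psi_recip_root_def by (metis norm_power power_one)
  then have sq: "(real s * Re x + (real s - 1))\<^sup>2 + (real s * Im x)\<^sup>2 = 1"
    using assms(1) by (simp add: cmod_def of_nat_diff)
  have unit: "(Re x)\<^sup>2 + (Im x)\<^sup>2 = 1"
    using assms(3) by (simp add: cmod_def)
  have "(real s * Re x + (real s - 1))\<^sup>2 + (real s * Im x)\<^sup>2
      = (real s)\<^sup>2 * ((Re x)\<^sup>2 + (Im x)\<^sup>2) + 2 * real s * (real s - 1) * Re x + (real s - 1)\<^sup>2"
    by (simp add: power2_eq_square algebra_simps)
  with sq unit have "(real s)\<^sup>2 + 2 * real s * (real s - 1) * Re x + (real s - 1)\<^sup>2 = 1"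
    by simp
  moreover have "2 * real s * (real s - 1) * (Re x + 1)
      = (real s)\<^sup>2 + 2 * real s * (real s - 1) * Re x + (real s - 1)\<^sup>2 - 1"
    by (simp add: power2_eq_square algebra_simps)
  ultimately have "2 * real s * (real s - 1) * (Re x + 1) = 0"
    by simp
  then have re: "Re x = -1" using assms(1) by simp
  with unit have "Im x = 0" by simp
  with re show ?thesis by (simp add: complex_eq_iff)
qed

(* x^s + 1 = s (x + 1) makes the s powers (-x)^i, all in the closed unit disc, sum to s;
   so all their real parts are 1, in particular Re (-x) = 1. *)
lemma psi_recip_root_norm_gt_1_odd:
  assumes "s \<ge> 2" and "odd s" and "psi_recip_root s x" and "x \<noteq> -1"
  shows "1 < cmod x"
proof (rule ccontr)
  assume "\<not> 1 < cmod x"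
  then have le: "cmod x \<le> 1" by simp
  have "(x + 1) * (\<Sum>i\<in>{..<s}. (-x) ^ i) = x ^ s + 1"
    using power_diff_sumr2[of "-x" s 1] assms(2) by (simp add: algebra_simps)
  also have "\<dots> = (x + 1) * of_nat s"
    using assms(1,3) by (simp add: psi_recip_root_def of_nat_diff algebra_simps)
  finally have sum_eq: "(\<Sum>i\<in>{..<s}. (-x) ^ i) = of_nat s"
    using assms(4) by (simp add: add_eq_0_iff2)
  have "real s = (\<Sum>i\<in>{..<s}. Re ((-x) ^ i))"
    using arg_cong[where f = Re, OF sum_eq] by simp
  also have "\<dots> = Re (-x) + (\<Sum>i\<in>{..<s} - {1}. Re ((-x) ^ i))"
    using assms(1) by (subst sum.remove[of _ 1]) auto
  finally have "real s = Re (-x) + (\<Sum>i\<in>{..<s} - {1}. Re ((-x) ^ i))" .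
  moreover have "(\<Sum>i\<in>{..<s} - {1}. Re ((-x) ^ i)) \<le> (\<Sum>i\<in>{..<s} - {1}. 1)"
  proof (rule sum_mono)
    fix i
    have "Re ((-x) ^ i) \<le> cmod x ^ i"
      using complex_Re_le_cmod[of "(-x) ^ i"] by (simp add: norm_power)
    also have "\<dots> \<le> 1" using le by (simp add: power_le_one)
    finally show "Re ((-x) ^ i) \<le> 1" .
  qed
  moreover have "(\<Sum>i\<in>{..<s} - {1}. (1::real)) = real s - 1"
    using assms(1) by (simp add: card_Diff_singleton)
  ultimately have "Re x \<le> -1" by simp
  moreover have "\<bar>Re x\<bar> \<le> 1" using abs_Re_le_cmod[of x] le by linarith
  ultimately have re: "Re x = -1" by linarith
  have "(Re x)\<^sup>2 + (Im x)\<^sup>2 \<le> 1"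
    using le by (simp add: cmod_power2[symmetric] power_le_one)
  with re have "Im x = 0" by simp
  with re have "x = -1" by (simp add: complex_eq_iff)
  with assms(4) show False ..
qed

lemma psi_recip_root_in_unit_disc_unique:
  assumes "s \<ge> 2" and "psi_recip_root s x" and "psi_recip_root s y"
    and "cmod x < 1" and "cmod y < 1"
  shows "x = y"
proof (rule ccontr)
  assume "x \<noteq> y"
  define m where "m = max (cmod x) (cmod y)"
  have m: "0 \<le> m" "m < 1" using assms(4,5) by (auto simp: m_def le_max_iff_disj)
  have "(x - y) * (\<Sum>i\<in>{..<s}. y ^ (s - Suc i) * x ^ i) = (x - y) * of_nat s"
    using power_diff_sumr2[of x s y] assms(2,3) by (simp add: psi_recip_root_def algebra_simps)
  with \<open>x \<noteq> y\<close> have "real s = cmod (\<Sum>i\<in>{..<s}. y ^ (s - Suc i) * x ^ i)" by simp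
  also have "\<dots> \<le> (\<Sum>i\<in>{..<s}. cmod y ^ (s - Suc i) * cmod x ^ i)"
    by (rule norm_sum[THEN order_trans]) (simp add: norm_mult norm_power)
  also have "\<dots> < (\<Sum>i\<in>{..<s}. 1)"
  proof (rule sum_strict_mono)
    fix i assume "i \<in> {..<s}"
    then have "cmod y ^ (s - Suc i) * cmod x ^ i \<le> m ^ (s - Suc i) * m ^ i"
      by (intro mult_mono power_mono) (auto simp: m_def le_max_iff_disj intro: zero_le_power)
    also have "\<dots> = m ^ (s - 1)" using \<open>i \<in> {..<s}\<close> by (simp flip: power_add)
    also have "\<dots> < 1" using m assms(1) by (simp add: power_less_one_iff)
    finally show "cmod y ^ (s - Suc i) * cmod x ^ i < 1" .
  qed (use assms(1) in \<open>auto simp: lessThan_empty_iff\<close>)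
  finally show False by simp
qed

lemma psi_recip_root_in_unit_disc_norm_ge:
  assumes "s \<ge> 2" and "psi_recip_root s x" and "cmod x < 1"
  shows "(real s - 2) / real s \<le> cmod x"
proof -
  have "real s - 1 - cmod x ^ s \<le> cmod (of_nat (s - 1) - x ^ s)"
    using norm_triangle_ineq2[of "of_nat (s - 1)" "x ^ s"] assms(1)
    by (simp add: norm_power del: of_nat_diff)
  also have "\<dots> = real s * cmod x"
    using assms(2) by (simp add: psi_recip_root_def norm_mult)
  finally have "real s - 1 - cmod x ^ s \<le> real s * cmod x" .
  moreover have "cmod x ^ s \<le> 1" using assms(3) by (simp add: power_le_one)
  ultimately show ?thesis using assms(1) by (simp add: divide_le_eq mult.commute)
qed

lemma s_div_s_minus_2_power_less_9:
  assumes "s \<ge> 26"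
  shows "(real s / (real s - 2)) ^ s < 9"
proof -
  define t where "t = 2 / (real s - 2)"
  have "real s / (real s - 2) = 1 + t" using assms by (simp add: t_def field_simps)
  also have "(1 + t) ^ s \<le> exp t ^ s"
    using assms by (intro power_mono) (simp_all add: t_def exp_ge_add_one_self)
  also have "\<dots> = exp (real s * t)" by (simp flip: exp_of_nat_mult)
  also have "\<dots> \<le> exp (2 + 1 / 6)"
    using assms by (simp add: t_def field_simps)
  also have "\<dots> = exp 1 * exp 1 * exp (1 / 6)" by (simp flip: exp_add)
  also have "\<dots> < 9"
  proof -
    have "exp 1 * exp 1 < (272 / 100 :: real) * (272 / 100)"
      using e_less_272 by (intro mult_strict_mono) auto
    moreover have "exp (1 / 6 :: real) \<le> 6 / 5"
      using exp_minus_ge[of "1 / 6"] by (simp add: exp_minus field_simps)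
    ultimately have "exp 1 * exp 1 * exp (1 / 6) < (272 / 100 :: real) * (272 / 100) * (6 / 5)"
      by (rule mult_less_le_imp_less) auto
    then show ?thesis by simp
  qed
  finally show ?thesis .
qed

lemma sin_pi_div_ge:
  assumes "s \<ge> 9"
  shows "3 / real s \<le> sin (pi / real s)"
proof -
  define t where "t = pi / real s"
  have t: "0 < t" using assms by (simp add: t_def)
  have "\<bar>sin t - (\<Sum>m<3. sin_coeff m * t ^ m)\<bar> \<le> inverse (fact 3) * \<bar>t\<bar> ^ 3"
    by (rule Maclaurin_sin_bound)
  moreover have "(\<Sum>m<3. sin_coeff m * t ^ m) = t"
    by (simp add: sin_coeff_def numeral_3_eq_3)
  ultimately have "\<bar>sin t - t\<bar> \<le> t ^ 3 / 6"
    using t by (simp add: fact_numeral)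
  then have sin_ge: "t - t ^ 3 / 6 \<le> sin t"
    unfolding abs_le_iff by linarith
  have "t ^ 3 / 6 = pi ^ 3 / (6 * real s ^ 3)" by (simp add: t_def power_divide)
  also have "\<dots> \<le> 4 ^ 3 / (6 * real s ^ 3)"
    using pi_less_4 by (intro divide_right_mono power_mono) auto
  also have "\<dots> \<le> (314 / 100 - 3) / real s"
  proof -
    have "81 \<le> real s ^ 2" using power_mono[of 9 "real s" 2] assms by simp
    then show ?thesis using assms by (simp add: field_simps power2_eq_square power3_eq_cube)
  qed
  also have "\<dots> \<le> t - 3 / real s"
    using pi_approx assms by (simp add: t_def field_simps)
  finally have "3 / real s \<le> sin t" using sin_ge by linarith
  then show ?thesis by (simp add: t_def)
qed

lemma psi_recip_root_real_norm_gt_even: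
  assumes "s \<ge> 26" and "even s" and "psi_recip_root s x" and "Im x = 0" and "1 < cmod x"
  shows "real s / (real s - 2) < cmod x"
proof -
  define a where "a = Re x"
  have x: "x = of_real a" using assms(4) by (simp add: a_def complex_eq_iff)
  have "of_real (a ^ s) = (of_real (real s * a + (real s - 1)) :: complex)"
    using assms(1,3) by (simp add: x psi_recip_root_def of_nat_diff)
  then have root: "a ^ s = real s * a + (real s - 1)"
    by (simp only: of_real_eq_iff)
  have "1 < a"
  proof (rule ccontr)
    assume "\<not> 1 < a"
    then have "a < -1" using assms(5) x by auto
    then have "real s * a \<le> real s * (-1)" by (intro mult_left_mono) auto
    then have "real s * a + (real s - 1) < 0" by simp
    moreover have "0 \<le> a ^ s" using assms(2) by (simp add: zero_le_even_power)
    ultimately show False using root by simp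
  qed
  have "real s * 1 \<le> real s * a" using \<open>1 < a\<close> by (intro mult_left_mono) auto
  moreover have "26 \<le> real s" using assms(1) by simp
  ultimately have "9 \<le> a ^ s" using root by linarith
  show ?thesis
  proof (rule ccontr)
    assume "\<not> ?thesis"
    then have "a \<le> real s / (real s - 2)" using x \<open>1 < a\<close> by simp
    then have "a ^ s \<le> (real s / (real s - 2)) ^ s" using \<open>1 < a\<close> by (intro power_mono) auto
    with s_div_s_minus_2_power_less_9[OF assms(1)] \<open>9 \<le> a ^ s\<close> show False by simp
  qed
qed

lemma psi_recip_root_cnj:
  assumes "psi_recip_root s x"
  shows "psi_recip_root s (cnj x)"
  using arg_cong[where f = cnj, OF assms[unfolded psi_recip_root_def]]
  by (simp add: psi_recip_root_def)

lemma psi_recip_root_polar_even: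
  assumes "s \<ge> 2" and "even s" and "psi_recip_root s (rcis r (pi - \<theta>))" and "r \<noteq> 0"
  shows "r ^ (s - 1) * sin (real s * \<theta>) = - real s * sin \<theta>"
proof -
  have "sin (real s * (pi - \<theta>)) = - sin (real s * \<theta>)"
    using assms(2) by (simp add: right_diff_distrib sin_diff)
  moreover have "r ^ s = r * r ^ (s - 1)" using assms(1) by (cases s) auto
  ultimately have "- (r * (r ^ (s - 1) * sin (real s * \<theta>))) = r ^ s * sin (real s * (pi - \<theta>))"
    by simp
  also have "\<dots> = Im (rcis r (pi - \<theta>) ^ s)" by (simp add: DeMoivre2)
  also have "\<dots> = r * (real s * sin \<theta>)"
    using assms(3) by (simp add: psi_recip_root_def)
  finally have "r * (r ^ (s - 1) * sin (real s * \<theta>)) = r * (- real s * sin \<theta>)"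
    by (metis minus_equation_iff mult_minus_left mult_minus_right)
  then show ?thesis using mult_left_cancel[OF assms(4)] by blast
qed

(* Write x = |x| e^(i (pi - theta)) with 0 < theta < pi/2.  Comparing imaginary parts gives
   |x|^(s-1) sin (s theta) = - s sin theta < 0, but |x|^(s-1) < 3 would force
   sin theta < 3/s <= sin (pi/s), hence 0 < s theta < pi. *)
lemma psi_recip_root_second_quadrant_norm_power_ge_even:
  assumes "s \<ge> 26" and "even s" and "psi_recip_root s x" and "Re x < 0" and "0 < Im x"
  shows "3 \<le> cmod x ^ (s - 1)"
proof (rule ccontr)
  assume "\<not> ?thesis"
  then have small: "cmod x ^ (s - 1) < 3" by simp
  define \<theta> where "\<theta> = pi - Arg x"
  have x0: "x \<noteq> 0" using assms(5) by auto
  have "0 < Arg x" "Arg x < pi" using assms(5) Arg_lt_pi by blast+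
  moreover have "pi / 2 < Arg x"
  proof (rule ccontr)
    assume "\<not> pi / 2 < Arg x"
    then have "0 \<le> cos (Arg x)" using \<open>0 < Arg x\<close> by (intro cos_ge_zero) auto
    moreover have "cos (Arg x) < 0" using assms(4) x0 by (simp add: cos_Arg divide_neg_pos)
    ultimately show False by simp
  qed
  ultimately have \<theta>: "0 < \<theta>" "\<theta> < pi / 2" by (auto simp: \<theta>_def)
  have "psi_recip_root s (rcis (cmod x) (pi - \<theta>))"
    using assms(3) by (simp add: \<theta>_def rcis_cmod_Arg)
  from psi_recip_root_polar_even[OF _ assms(2) this] assms(1) x0
  have polar: "cmod x ^ (s - 1) * sin (real s * \<theta>) = - real s * sin \<theta>" by simp
  have "0 < sin \<theta>" using \<theta> by (intro sin_gt_zero) auto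
  then have "cmod x ^ (s - 1) * sin (real s * \<theta>) < 0" using polar assms(1) by simp
  then have neg: "sin (real s * \<theta>) < 0" using x0 by (simp add: mult_less_0_iff)
  have "real s * sin \<theta> = cmod x ^ (s - 1) * (- sin (real s * \<theta>))" using polar by simp
  also have "\<dots> \<le> cmod x ^ (s - 1) * 1" by (intro mult_left_mono) auto
  finally have "sin \<theta> < 3 / real s" using small assms(1) by (simp add: field_simps)
  also have "\<dots> \<le> sin (pi / real s)" using sin_pi_div_ge assms(1) by simp
  finally have sin_less: "sin \<theta> < sin (pi / real s)" .
  have "\<theta> < pi / real s"
  proof (rule ccontr)
    assume "\<not> \<theta> < pi / real s"
    then have le: "pi / real s \<le> \<theta>" by simp
    have "0 \<le> pi / real s" by simp
    then have ge: "- (pi / 2) \<le> pi / real s" using pi_gt_zero by linarith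
    from sin_monotone_2pi_le[OF ge le] \<theta> sin_less show False by simp
  qed
  then have "0 < sin (real s * \<theta>)"
    using \<theta> assms(1) by (intro sin_gt_zero) (auto simp: field_simps)
  with neg show False by simp
qed

lemma psi_recip_root_right_half_plane_norm_power_ge:
  assumes "s \<ge> 8" and "psi_recip_root s x" and "0 \<le> Re x"
  shows "3 \<le> cmod x ^ (s - 1)"
proof (rule ccontr)
  assume "\<not> ?thesis"
  then have small: "cmod x ^ (s - 1) < 3" by simp
  have "cmod x < 2"
  proof (rule ccontr)
    assume "\<not> cmod x < 2"
    then have "2 ^ (s - 1) \<le> cmod x ^ (s - 1)" by (intro power_mono) auto
    moreover have "(2::real) ^ 2 \<le> 2 ^ (s - 1)" using assms(1) by (intro power_increasing) auto
    ultimately show False using small by simp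
  qed
  have "real s - 1 \<le> Re (of_nat s * x + of_nat (s - 1))"
    using assms(1,3) by (simp add: of_nat_diff)
  also have "\<dots> \<le> cmod (of_nat s * x + of_nat (s - 1))"
    by (rule complex_Re_le_cmod)
  also have "\<dots> = cmod (x ^ s)"
    using assms(2) by (simp add: psi_recip_root_def)
  also have "\<dots> = cmod x * cmod x ^ (s - 1)"
    using assms(1) by (simp add: norm_power power_Suc[symmetric])
  also have "\<dots> \<le> 2 * 3"
    using \<open>cmod x < 2\<close> small by (intro mult_mono) auto
  finally show False using assms(1) by simp
qed

lemma psi_recip_root_nonreal_norm_power_ge_even:
  assumes "s \<ge> 26" and "even s" and "psi_recip_root s x" and "Im x \<noteq> 0"
  shows "3 \<le> cmod x ^ (s - 1)"
proof (cases "Re x < 0")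
  case True
  show ?thesis
  proof (cases "0 < Im x")
    case True
    with \<open>Re x < 0\<close> show ?thesis
      using psi_recip_root_second_quadrant_norm_power_ge_even assms by blast
  next
    case False
    with assms(4) have "0 < Im (cnj x)" by simp
    with \<open>Re x < 0\<close> show ?thesis
      using psi_recip_root_second_quadrant_norm_power_ge_even[OF assms(1,2) psi_recip_root_cnj[OF assms(3)]]
      by simp
  qed
next
  case False
  with assms(1,3) show ?thesis by (intro psi_recip_root_right_half_plane_norm_power_ge) auto
qed

lemma prod_norm_cnj_pair_gt_even:
  assumes "s \<ge> 26" and "even s" and "psi_recip_root s x" and "1 < cmod x"
  shows "real s / (real s - 2) < (\<Prod>z\<in>{x, cnj x}. cmod z)"
proof (cases "Im x = 0")
  case True
  then have "cnj x = x" by (simp add: complex_eq_iff)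
  with psi_recip_root_real_norm_gt_even[OF assms(1-3) True assms(4)] show ?thesis by simp
next
  case False
  then have "cnj x \<noteq> x" by (auto simp: complex_eq_iff)
  then have prod: "(\<Prod>z\<in>{x, cnj x}. cmod z) = (cmod x)\<^sup>2" by (simp add: power2_eq_square)
  have "3\<^sup>2 \<le> (cmod x ^ (s - 1))\<^sup>2"
    using psi_recip_root_nonreal_norm_power_ge_even[OF assms(1-3) False] by (intro power_mono) auto
  also have "(cmod x ^ (s - 1))\<^sup>2 = ((cmod x)\<^sup>2) ^ (s - 1)"
    by (metis power_mult mult.commute)
  finally have big: "9 \<le> ((cmod x)\<^sup>2) ^ (s - 1)" by simp
  show ?thesis
  proof (rule ccontr)
    assume "\<not> ?thesis"
    then have "((cmod x)\<^sup>2) ^ (s - 1) \<le> (real s / (real s - 2)) ^ (s - 1)"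
      using prod by (intro power_mono) auto
    also have "\<dots> \<le> (real s / (real s - 2)) ^ s"
      using assms(1) by (intro power_increasing) auto
    also have "\<dots> < 9" using s_div_s_minus_2_power_less_9[OF assms(1)] .
    finally show False using big by simp
  qed
qed

lemma prod_gt_1:
  fixes f :: "'a \<Rightarrow> real"
  assumes "finite A" and "a \<in> A" and "\<And>b. b \<in> A \<Longrightarrow> 1 \<le> f b" and "1 < f a"
  shows "1 < prod f A"
proof -
  have "1 \<le> prod f (A - {a})" using assms(3) by (intro prod_ge_1) auto
  from mult_left_mono[OF this, of "f a"] assms(4) have "f a \<le> f a * prod f (A - {a})" by simp
  with assms(4) show ?thesis unfolding prod.remove[OF assms(1,2)] by linarith
qed

lemma prod_norm_psi_recip_roots_gt_1_odd:
  assumes "s \<ge> 2" and "odd s" and "finite X" and "\<And>x. x \<in> X \<Longrightarrow> psi_recip_root s x"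
    and "x\<^sub>0 \<in> X" and "x\<^sub>0 \<noteq> -1"
  shows "1 < (\<Prod>x\<in>X. cmod x)"
proof (rule prod_gt_1[OF assms(3,5)])
  fix x assume "x \<in> X"
  then show "1 \<le> cmod x"
    using psi_recip_root_norm_gt_1_odd[OF assms(1,2) assms(4)] by (cases "x = -1") force+
qed (use psi_recip_root_norm_gt_1_odd assms in blast)

lemma psi_recip_root_norm_ne_1_even:
  assumes "s \<ge> 2" and "even s" and "psi_recip_root s x"
  shows "cmod x \<noteq> 1"
proof
  assume "cmod x = 1"
  with assms(1,3) have "x = -1" by (rule psi_recip_root_unit_circle_eq_minus_1)
  with assms psi_recip_root_minus_one_iff show False by simp
qed

lemma psi_recip_root_outside_unit_disc_even:
  assumes "s \<ge> 2" and "even s" and "psi_recip_root s b" and "cmod b < 1"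
    and "psi_recip_root s x" and "x \<noteq> b"
  shows "1 < cmod x"
  using psi_recip_root_norm_ne_1_even[OF assms(1,2,5)]
    psi_recip_root_in_unit_disc_unique[OF assms(1,5,3) _ assms(4)] assms(6)
  by fastforce

lemma prod_norm_psi_recip_roots_outside_gt_even:
  assumes "s \<ge> 26" and "even s" and "finite Y" and "Y \<noteq> {}"
    and "\<And>y. y \<in> Y \<Longrightarrow> psi_recip_root s y \<and> 1 < cmod y" and "\<And>y. y \<in> Y \<Longrightarrow> cnj y \<in> Y"
  shows "real s / (real s - 2) < (\<Prod>y\<in>Y. cmod y)"
proof -
  obtain y where "y \<in> Y" using assms(4) by blast
  then have "real s / (real s - 2) < (\<Prod>z\<in>{y, cnj y}. cmod z)"
    using prod_norm_cnj_pair_gt_even[OF assms(1,2)] assms(5) by blast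
  also have "\<dots> \<le> (\<Prod>y\<in>Y. cmod y)"
    using \<open>y \<in> Y\<close> assms(3,5,6) by (intro prod_mono2) (auto intro: less_imp_le)
  finally show ?thesis .
qed

lemma prod_norm_psi_recip_roots_ne_1_even:
  assumes "s \<ge> 26" and "even s" and "finite X" and "\<And>x. x \<in> X \<Longrightarrow> psi_recip_root s x"
    and "\<And>x. x \<in> X \<Longrightarrow> cnj x \<in> X" and "X \<noteq> {}"
  shows "(\<Prod>x\<in>X. cmod x) \<noteq> 1"
proof (cases "\<forall>x\<in>X. 1 < cmod x")
  case True
  with assms have "real s / (real s - 2) < (\<Prod>x\<in>X. cmod x)"
    by (intro prod_norm_psi_recip_roots_outside_gt_even) auto
  moreover have "1 < real s / (real s - 2)" using assms(1) by simp
  ultimately show ?thesis by simp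
next
  case False
  have s: "s \<ge> 2" using assms(1) by simp
  from False obtain b where b: "b \<in> X" "cmod b < 1"
    using psi_recip_root_norm_ne_1_even[OF s assms(2) assms(4)] by (meson linorder_neqE not_less)
  have outside: "1 < cmod x" if "x \<in> X - {b}" for x
    using psi_recip_root_outside_unit_disc_even[OF s assms(2) assms(4)[OF b(1)] b(2) assms(4)] that
    by blast
  have prod: "(\<Prod>x\<in>X. cmod x) = cmod b * (\<Prod>x\<in>X - {b}. cmod x)"
    using prod.remove[OF assms(3) b(1)] .
  show ?thesis
  proof (cases "X - {b} = {}")
    case True
    with prod b(2) show ?thesis by simp
  next
    case False
    have "cnj x \<in> X - {b}" if "x \<in> X - {b}" for x
      using assms(5) that outside[OF that] b(2) by auto
    with False outside assms have "real s / (real s - 2) < (\<Prod>x\<in>X - {b}. cmod x)"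
      by (intro prod_norm_psi_recip_roots_outside_gt_even) auto
    then have "1 < (real s - 2) / real s * (\<Prod>x\<in>X - {b}. cmod x)"
      using assms(1) by (simp add: field_simps)
    also have "\<dots> \<le> (\<Prod>x\<in>X. cmod x)"
      unfolding prod
      using psi_recip_root_in_unit_disc_norm_ge[OF _ assms(4)[OF b(1)] b(2)] assms(1)
      by (intro mult_right_mono prod_nonneg) auto
    finally show ?thesis by simp
  qed
qed

lemma prod_norm_psi_recip_roots_ne_1:
  assumes "s \<ge> 26" and "finite X" and "\<And>x. x \<in> X \<Longrightarrow> psi_recip_root s x"
    and "\<And>x. x \<in> X \<Longrightarrow> cnj x \<in> X" and "x\<^sub>0 \<in> X" and "x\<^sub>0 \<noteq> -1"
  shows "(\<Prod>x\<in>X. cmod x) \<noteq> 1"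
proof (cases "even s")
  case True
  with assms show ?thesis by (intro prod_norm_psi_recip_roots_ne_1_even) auto
next
  case False
  with assms prod_norm_psi_recip_roots_gt_1_odd[of s X x\<^sub>0] show ?thesis by simp
qed

lemma card_gt_ln_prod_norm_psi_recip_roots:
  assumes "s \<ge> 3" and "finite X" and "X \<noteq> {}" and "\<And>x. x \<in> X \<Longrightarrow> psi_recip_root s x"
  shows "ln (\<Prod>x\<in>X. cmod x) * (real s - 1) / (1 + ln (real s - 1)) < card X"
proof -
  have "ln (\<Prod>x\<in>X. cmod x) = (\<Sum>x\<in>X. ln (cmod x))"
    using assms psi_recip_root_nonzero[of s] by (intro ln_prod) auto
  also have "\<dots> < (\<Sum>x\<in>X. (1 + ln (real s - 1)) / (real s - 1))"
  proof (rule sum_strict_mono[OF assms(2,3)])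
    fix x assume "x \<in> X"
    then have root: "psi_recip_root s x" by (rule assms(4))
    have x0: "x \<noteq> 0" using psi_recip_root_nonzero[OF _ root] assms(1) by simp
    have "cmod x ^ (s - 1) < exp 1 * (real s - 1)"
      using psi_recip_root_norm_power_less[OF assms(1) root] .
    then have "ln (cmod x ^ (s - 1)) < ln (exp 1 * (real s - 1))"
      using assms(1) x0 by (subst ln_less_cancel_iff) auto
    then have "(real s - 1) * ln (cmod x) < 1 + ln (real s - 1)"
      using x0 assms(1) by (simp add: ln_realpow ln_mult of_nat_diff)
    then show "ln (cmod x) < (1 + ln (real s - 1)) / (real s - 1)"
      using assms(1) by (simp add: field_simps)
  qed
  finally have "ln (\<Prod>x\<in>X. cmod x) < card X * ((1 + ln (real s - 1)) / (real s - 1))"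
    by simp
  moreover have "0 < 1 + ln (real s - 1)" using assms(1) by (simp add: add_pos_nonneg)
  ultimately show ?thesis using assms(1) by (simp add: field_simps)
qed

section \<open>Irreducible factors of psi\<close>

lemma lead_coeff_psi: "lead_coeff (psi s) = 1"
proof -
  define A :: "int poly" where "A = Polynomial.monom 1 (s - 1) * [:int s, 1:]"
  have "degree A = degree (Polynomial.monom (1::int) (s - 1)) + degree [:int s, 1:]"
    unfolding A_def by (rule degree_mult_eq) auto
  then have A: "degree A = s - 1 + 1" "lead_coeff A = 1"
    unfolding A_def lead_coeff_mult by (simp_all add: degree_monom_eq)
  have psi: "psi s = [:- ((int s - 1) ^ (s - 1)):] + A" by (simp add: psi_def A_def)
  have "lead_coeff ([:- ((int s - 1) ^ (s - 1)):] + A) = lead_coeff A"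
    by (rule lead_coeff_add_le) (simp add: A)
  then show ?thesis by (metis psi A(2))
qed

lemma irreducible_dvd_of_common_root:
  fixes f :: "'a :: field_gcd \<Rightarrow> 'b :: field_gcd"
  assumes "field_hom' f" and "irreducible p"
    and "poly (map_poly f p) a = 0" and "poly (map_poly f q) a = 0"
  shows "p dvd q"
proof -
  interpret field_hom' f by fact
  have "[:-a, 1:] dvd gcd (map_poly f p) (map_poly f q)"
    using assms(3,4) by (simp add: poly_eq_0_iff_dvd)
  then have root: "poly (map_poly f (gcd p q)) a = 0"
    by (simp add: map_poly_gcd poly_eq_0_iff_dvd)
  have "\<not> is_unit (gcd p q)"
  proof
    assume "is_unit (gcd p q)"
    then obtain c where "gcd p q = [:c:]" "c dvd 1"
      unfolding is_unit_poly_iff by blast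
    then have "c \<noteq> 0" by auto
    with root \<open>gcd p q = [:c:]\<close> show False by (simp add: map_poly_pCons)
  qed
  then have "p dvd gcd p q" using irreducibleD'[OF assms(2) gcd_dvd1] by blast
  then show ?thesis using dvd_trans gcd_dvd2 by blast
qed

lemma rsquarefree_map_poly_of_irreducible:
  fixes f :: "'a :: {field_char_0, field_gcd} \<Rightarrow> 'b :: {field_char_0, field_gcd}"
  assumes "field_hom' f" and "irreducible p"
  shows "rsquarefree (map_poly f p)"
proof -
  interpret field_hom' f by fact
  have "degree p \<noteq> 0"
    using assms(2) irreducible_not_unit is_unit_iff_degree by fastforce
  then have "pderiv p \<noteq> 0" and "degree (pderiv p) < degree p"
    by (simp_all add: pderiv_eq_0_iff degree_pderiv)
  then have "\<not> p dvd pderiv p" using dvd_imp_degree_le by fastforce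
  then show ?thesis
    unfolding rsquarefree_roots map_poly_pderiv[symmetric]
    using irreducible_dvd_of_common_root[OF assms] by blast
qed

lemma monic_factor_of_monic_int_poly_integral:
  fixes p :: "rat poly" and P :: "int poly"
  assumes "lead_coeff p = 1" and "lead_coeff P = 1" and "p dvd map_poly of_int P"
  obtains Q where "p = map_poly of_int Q"
proof -
  obtain h where h: "map_poly of_int P = p * h" using assms(3) by (elim dvdE)
  obtain r Q where rQ: "rat_to_normalized_int_poly p = (r, Q)" by force
  then have p: "p = Polynomial.smult r (map_poly of_int Q)" and "r > 0"
    using rat_to_normalized_int_poly by auto
  from rat_to_int_factor_explicit[OF h rQ] obtain R where "P = Q * R" by blast
  then have "lead_coeff Q * lead_coeff R = 1" using assms(2) by (simp add: lead_coeff_mult)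
  then have "\<bar>lead_coeff Q\<bar> = 1" by (metis dvd_triv_left zdvd1_eq)
  moreover have r: "r * of_int (lead_coeff Q) = 1" using assms(1) p \<open>r > 0\<close> by simp
  ultimately have "lead_coeff Q = 1" using \<open>r > 0\<close> by (auto simp: abs_if split: if_splits)
  with r have "r = 1" by simp
  with p show ?thesis by (intro that) simp
qed

lemma prod_roots_monic_rsquarefree:
  fixes q :: "complex poly"
  assumes "rsquarefree q" and "lead_coeff q = 1"
  shows "(\<Prod>z | poly q z = 0. z) = (-1) ^ degree q * poly q 0"
proof -
  define Z where "Z = {z. poly q z = 0}"
  have "q \<noteq> 0" using assms(1) by (simp add: rsquarefree_def)
  then have card: "card Z = degree q" using rsquarefree_card_degree assms(1) by (simp add: Z_def)
  have q: "q = (\<Prod>z\<in>Z. [:-z, 1:])"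
    using complex_poly_decompose_rsquarefree[OF assms(1)] assms(2) by (simp add: Z_def)
  have "poly q 0 = (\<Prod>z\<in>Z. (-1) * z)" by (subst q) (simp add: poly_prod)
  also have "\<dots> = (-1) ^ degree q * (\<Prod>z\<in>Z. z)"
    unfolding prod.distrib by (simp add: card)
  finally show ?thesis by (simp add: Z_def)
qed

lemma of_rat_in_Reals: "(of_rat r :: complex) \<in> \<real>"
  by (cases r) (simp add: of_rat_rat)

lemma poly_of_rat_cnj_eq_0:
  assumes "poly (map_poly of_rat p) z = (0 :: complex)"
  shows "poly (map_poly of_rat p) (cnj z) = 0"
  using poly_cnj_real[of "map_poly of_rat p" z] assms
  by (simp add: of_rat_hom.coeff_map_poly_hom of_rat_in_Reals)

lemma map_poly_of_rat_of_int:
  "map_poly (of_rat :: rat \<Rightarrow> 'a :: field_char_0) (map_poly of_int Q) = map_poly of_int Q"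
  by (subst map_poly_map_poly) (auto simp: o_def)

lemma poly_eq_0_of_rat_factor:
  fixes p :: "rat poly" and Q :: "int poly" and z :: complex
  assumes "p dvd map_poly of_int Q" and "poly (map_poly of_rat p) z = 0"
  shows "poly (map_poly of_int Q) z = 0"
proof -
  interpret map_poly_comm_ring_hom "of_rat :: rat \<Rightarrow> complex" by unfold_locales
  obtain h where "map_poly of_int Q = p * h" using assms(1) by (elim dvdE)
  then have "map_poly of_rat (map_poly of_int Q) = map_poly of_rat p * map_poly (of_rat :: rat \<Rightarrow> complex) h"
    by (simp add: hom_mult)
  then show ?thesis using assms(2) by (simp add: map_poly_of_rat_of_int)
qed

lemma field_hom'_of_rat: "field_hom' (of_rat :: rat \<Rightarrow> complex)"
  by unfold_locales

lemma roots_of_psi_factor: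
  fixes p :: "rat poly"
  assumes "s \<ge> 2" and "irreducible p" and "p dvd map_poly of_int (psi s)"
  defines "R \<equiv> {\<beta>. poly (map_poly of_rat p) \<beta> = (0 :: complex)}"
  shows "finite R" and "card R = degree p"
    and "\<And>\<beta>. \<beta> \<in> R \<Longrightarrow> \<beta> \<noteq> 0 \<and> psi_recip_root s (of_nat (s - 1) / \<beta>)"
    and "\<And>\<beta>. \<beta> \<in> R \<Longrightarrow> cnj \<beta> \<in> R"
proof -
  have "rsquarefree (map_poly (of_rat :: rat \<Rightarrow> complex) p)"
    by (rule rsquarefree_map_poly_of_irreducible[OF field_hom'_of_rat assms(2)])
  moreover from this have nz: "map_poly (of_rat :: rat \<Rightarrow> complex) p \<noteq> 0"
    by (simp add: rsquarefree_def)
  ultimately show "card R = degree p"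
    using rsquarefree_card_degree[OF nz] by (simp add: R_def)
  show "finite R" using poly_roots_finite[OF nz] by (simp add: R_def)
  fix \<beta> assume "\<beta> \<in> R"
  then have "poly (map_poly of_int (psi s)) \<beta> = 0"
    using poly_eq_0_of_rat_factor[OF assms(3)] by (simp add: R_def)
  then show "\<beta> \<noteq> 0 \<and> psi_recip_root s (of_nat (s - 1) / \<beta>)"
    using psi_recip_root_of_psi_root[OF assms(1)] by simp
  show "cnj \<beta> \<in> R" using \<open>\<beta> \<in> R\<close> poly_of_rat_cnj_eq_0 by (simp add: R_def)
qed

lemma recip_roots_of_psi_factor:
  fixes p :: "rat poly"
  assumes "s \<ge> 2" and "irreducible p" and "p dvd map_poly of_int (psi s)"
  defines "X \<equiv> (\<lambda>\<beta>. of_nat (s - 1) / \<beta>) ` {\<beta>. poly (map_poly of_rat p) \<beta> = (0 :: complex)}"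
  shows "finite X" and "card X = degree p"
    and "\<And>x. x \<in> X \<Longrightarrow> psi_recip_root s x" and "\<And>x. x \<in> X \<Longrightarrow> cnj x \<in> X"
proof -
  let ?c = "of_nat (s - 1) :: complex"
  define R where "R = {\<beta>. poly (map_poly of_rat p) \<beta> = (0 :: complex)}"
  note R = roots_of_psi_factor[OF assms(1-3), folded R_def]
  have X: "X = (\<lambda>\<beta>. ?c / \<beta>) ` R" by (simp add: X_def R_def)
  have "?c \<noteq> 0" using assms(1) by simp
  then have "inj_on (\<lambda>\<beta>. ?c / \<beta>) R" by (intro inj_onI) simp
  then show "finite X" and "card X = degree p" using R(1,2) by (simp_all add: X card_image)
  fix x assume "x \<in> X"
  then obtain \<beta> where \<beta>: "\<beta> \<in> R" "x = ?c / \<beta>" by (auto simp: X)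
  then show "psi_recip_root s x" using R(3) by blast
  have "cnj x = ?c / cnj \<beta>" using \<beta>(2) by simp
  then show "cnj x \<in> X" unfolding X using R(4)[OF \<beta>(1)] by blast
qed

lemma abs_eq_prod_norm_recip:
  fixes R :: "complex set" and n :: int
  assumes "finite R" and "0 \<notin> R" and "c \<noteq> 0" and "of_int n * (\<Prod>\<beta>\<in>R. \<beta>) = c ^ card R"
  shows "\<bar>real_of_int n\<bar> = (\<Prod>x\<in>(\<lambda>\<beta>. c / \<beta>) ` R. cmod x)"
proof -
  have "inj_on (\<lambda>\<beta>. c / \<beta>) R" using assms(3) by (auto intro: inj_onI)
  then have "(\<Prod>x\<in>(\<lambda>\<beta>. c / \<beta>) ` R. cmod x) = cmod c ^ card R / (\<Prod>\<beta>\<in>R. cmod \<beta>)"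
    by (simp add: prod.reindex norm_divide prod_dividef)
  also have "cmod c ^ card R = \<bar>real_of_int n\<bar> * (\<Prod>\<beta>\<in>R. cmod \<beta>)"
    using arg_cong[where f = cmod, OF assms(4)] by (simp add: norm_mult norm_power prod_norm)
  finally show ?thesis using assms(1,2) by (metis nonzero_mult_div_cancel_right norm_eq_zero prod_zero_iff)
qed

lemma dvd_power_of_prod_roots:
  fixes p :: "rat poly" and Q :: "int poly" and n :: int
  assumes "irreducible p" and "lead_coeff p = 1" and "lead_coeff Q = 1" and "p dvd map_poly of_int Q"
    and "of_int n * (\<Prod>\<beta> | poly (map_poly of_rat p) \<beta> = 0. \<beta>) = (of_nat m :: complex) ^ degree p"
  shows "n dvd int m ^ degree p"
proof -
  obtain P where P: "p = map_poly of_int P"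
    using monic_factor_of_monic_int_poly_integral[OF assms(2-4)] .
  have "rsquarefree (map_poly (of_rat :: rat \<Rightarrow> complex) p)"
    by (rule rsquarefree_map_poly_of_irreducible[OF field_hom'_of_rat assms(1)])
  then have "(\<Prod>\<beta> | poly (map_poly of_rat p) \<beta> = 0. \<beta>) = (-1) ^ degree p * (of_int (poly P 0) :: complex)"
    using prod_roots_monic_rsquarefree assms(2) P by (simp add: of_rat_hom.poly_map_poly_0)
  with assms(5) have "of_int (n * ((-1) ^ degree p * poly P 0)) = (of_int (int m ^ degree p) :: complex)"
    by simp
  then have "n * ((-1) ^ degree p * poly P 0) = int m ^ degree p"
    by (simp only: of_int_eq_iff)
  then show ?thesis by (metis dvd_triv_left)
qed

lemma prime_least_prime_factor:
  assumes "m > 1"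
  shows "prime (least_prime_factor m)"
proof -
  obtain q where "prime q" "q dvd m" using prime_factor_nat[of m] assms by auto
  then have "q \<in> prime_factors m" using assms by (simp add: in_prime_factors_iff)
  then have "least_prime_factor m \<in> prime_factors m"
    unfolding least_prime_factor_def by (intro Min_in) auto
  then show ?thesis by (simp add: in_prime_factors_iff)
qed

lemma least_prime_factor_le:
  assumes "m > 0" and "prime q" and "q dvd m"
  shows "least_prime_factor m \<le> q"
  unfolding least_prime_factor_def using assms by (intro Min_le) (auto simp: in_prime_factors_iff)

lemma delta_le:
  fixes n :: int
  assumes "s \<ge> 3" and "n dvd int (s - 1) ^ k" and "\<bar>n\<bar> \<noteq> 1"
  shows "delta s \<le> ln \<bar>real_of_int n\<bar> * (real s - 1) / (1 + ln (real s - 1))"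
proof -
  have "n \<noteq> 0" using assms(1,2) by auto
  have "nat \<bar>n\<bar> \<noteq> 1" using assms(3) by simp
  then obtain q where q: "prime q" "q dvd nat \<bar>n\<bar>" using prime_factor_nat by blast
  from q(2) have "int q dvd int (nat \<bar>n\<bar>)" by (simp only: of_nat_dvd_iff)
  then have "int q dvd int ((s - 1) ^ k)" using assms(2) by (simp add: dvd_trans)
  then have "q dvd (s - 1) ^ k" by (simp only: of_nat_dvd_iff)
  then have "q dvd s - 1" using prime_dvd_power_nat[OF q(1)] by blast
  then have "least_prime_factor (s - 1) \<le> q" using least_prime_factor_le q(1) assms(1) by simp
  also have "q \<le> nat \<bar>n\<bar>" using q(2) \<open>n \<noteq> 0\<close> by (intro dvd_imp_le) auto
  finally have "real (least_prime_factor (s - 1)) \<le> \<bar>real_of_int n\<bar>" by linarith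
  moreover have "0 < least_prime_factor (s - 1)"
    using prime_least_prime_factor[of "s - 1"] assms(1) by (simp add: prime_gt_0_nat)
  ultimately have "ln (least_prime_factor (s - 1)) \<le> ln \<bar>real_of_int n\<bar>" by simp
  moreover have "0 \<le> 1 + ln (real s - 1)" using assms(1) by (simp add: add_nonneg_nonneg)
  ultimately show ?thesis
    unfolding delta_def using assms(1) by (intro divide_right_mono mult_right_mono) auto
qed

lemma recip_ne_minus_one_of_nontrivial:
  assumes "s \<ge> 2" and "poly (map_poly of_int (psi s)) \<alpha> = 0" and "\<not> trivial_root s \<alpha>"
  shows "of_nat (s - 1) / \<alpha> \<noteq> -1"
proof
  assume eq: "of_nat (s - 1) / \<alpha> = -1"
  then have "odd s"
    using psi_recip_root_of_psi_root[OF assms(1,2)] psi_recip_root_minus_one_iff assms(1) by simp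
  moreover have "\<alpha> = - of_nat (s - 1)"
    using eq by (metis divide_eq_minus_1_iff minus_minus)
  then have "\<alpha> = 1 - of_nat s" using assms(1) by (simp add: of_nat_diff)
  ultimately show False using assms(3) by (simp add: trivial_root_def)
qed

theorem mainTheorem20:
  fixes s :: nat and \<alpha> :: complex and p :: "rat poly" and n :: int
  assumes "s \<ge> 26"
    and "poly (map_poly of_int (psi s)) \<alpha> = 0"
    and "\<not> trivial_root s \<alpha>"
    and "irreducible p" and "lead_coeff p = 1" and "poly (map_poly of_rat p) \<alpha> = 0"
    and "of_int n * (\<Prod>\<beta>\<in>{\<beta>. poly (map_poly of_rat p) \<beta> = 0}. \<beta>)
           = (of_nat (s - 1) :: complex) ^ degree p"
  shows "real (degree p) > ln \<bar>real_of_int n\<bar> * (real s - 1) / (1 + ln (real s - 1))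
    \<and> ln \<bar>real_of_int n\<bar> * (real s - 1) / (1 + ln (real s - 1)) \<ge> delta s"
proof -
  let ?c = "of_nat (s - 1) :: complex"
  define R where "R = {\<beta>. poly (map_poly of_rat p) \<beta> = (0 :: complex)}"
  define X where "X = (\<lambda>\<beta>. ?c / \<beta>) ` R"
  have s: "s \<ge> 2" "s \<ge> 3" "?c \<noteq> 0" using assms(1) by auto
  have dvd: "p dvd map_poly of_int (psi s)"
    using irreducible_dvd_of_common_root[OF field_hom'_of_rat assms(4,6)] assms(2)
    by (simp add: map_poly_of_rat_of_int)
  note R = roots_of_psi_factor[OF s(1) assms(4) dvd, folded R_def]
  note X = recip_roots_of_psi_factor[OF s(1) assms(4) dvd, folded R_def, folded X_def]
  have "?c / \<alpha> \<in> X" unfolding X_def R_def using assms(6) by blast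
  have "0 \<notin> R" using R(3) by blast
  moreover have "of_int n * (\<Prod>\<beta>\<in>R. \<beta>) = ?c ^ card R" using assms(7) R(2) by (simp add: R_def)
  ultimately have abs_n: "\<bar>real_of_int n\<bar> = (\<Prod>x\<in>X. cmod x)"
    unfolding X_def using abs_eq_prod_norm_recip[OF R(1) _ s(3)] by blast
  have "(\<Prod>x\<in>X. cmod x) \<noteq> 1"
    by (rule prod_norm_psi_recip_roots_ne_1[OF assms(1) X(1,3,4) \<open>?c / \<alpha> \<in> X\<close>
          recip_ne_minus_one_of_nontrivial[OF s(1) assms(2,3)]])
  then have "\<bar>n\<bar> \<noteq> 1" using abs_n by (metis of_int_1 of_int_abs)
  moreover have "n dvd int (s - 1) ^ degree p"
    using dvd_power_of_prod_roots[OF assms(4,5) lead_coeff_psi dvd] assms(7) by simp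
  ultimately have "delta s \<le> ln \<bar>real_of_int n\<bar> * (real s - 1) / (1 + ln (real s - 1))"
    using delta_le[OF s(2)] by blast
  moreover have "ln \<bar>real_of_int n\<bar> * (real s - 1) / (1 + ln (real s - 1)) < degree p"
    using card_gt_ln_prod_norm_psi_recip_roots[OF s(2) X(1) _ X(3)] \<open>?c / \<alpha> \<in> X\<close>
    unfolding abs_n X(2) by blast
  ultimately show ?thesis by simp
qed

end
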